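(* Let $\mathbf{x}=(x_s)\in(\mathbb{R}_{>0})^{\mathbb{Z}^3}$ satisfy the positive Kashaev recurrence: for every $v\in\mathbb{Z}^3$, writing $z_{ijk}=x_{v+(i,j,k)}$ for $i,j,k\in\{0,1\}$, $$z_{111}=\frac{A+2\sqrt{D}}{z_{000}^2},$$ where $A=2z_{100}z_{010}z_{001}+z_{000}(z_{100}z_{011}+z_{010}z_{101}+z_{001}z_{110})$, $D=(z_{000}z_{011}+z_{010}z_{001})(z_{000}z_{101}+z_{100}z_{001})(z_{000}z_{110}+z_{100}z_{010})$, and $\sqrt{D}$ is the positive square root. Then for every $v\in\mathbb{Z}^3$, $$\prod_{C\ni v}K^C_v(\mathbf{x})=\prod_{S\ni v}(x_vx_{v_2}+x_{v_1}x_{v_3}),$$ where the first product is over the $8$ unit cubes $C$ in $\mathbb{Z}^3$ containing $v$, and the second is over the $12$ unit squares $S$ containing $v$, with $v,v_1,v_2,v_3$ the vertices of $S$ in cyclic order.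
   Context: For a unit cube $C$ in $\mathbb{Z}^3$ with vertex $v$ and $\mathbf{x}\in\mathbb{C}^{\mathbb{Z}^3}$, label the values of $\mathbf{x}$ at the vertices of $C$ as $z_{ijk}$, $i,j,k\in\{0,1\}$, via an identification of $C$ with $\{0,1\}^3$ (a cube isomorphism) sending $v$ to $000$, and set $K^C_v(\mathbf{x})=\tfrac12\big(z_{111}z_{000}^2-z_{000}(z_{100}z_{011}+z_{010}z_{101}+z_{001}z_{110})\big)-z_{100}z_{010}z_{001}$ (independent of the choice of identification). *)

theory Defs
  imports Complex_Main
begin

type_synonym pt = "int \<times> int \<times> int"

definition vadd :: "pt \<Rightarrow> pt \<Rightarrow> pt" where
  "vadd u w = (case u of (a, b, c) \<Rightarrow> case w of (d, e, f) \<Rightarrow> (a + d, b + e, c + f))"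


definition positive_kashaev :: "(pt \<Rightarrow> real) \<Rightarrow> bool" where
  "positive_kashaev x \<longleftrightarrow> (\<forall>s. x s > 0) \<and>
     (\<forall>v. let z = (\<lambda>i j k. x (vadd v (i, j, k)));
             A = 2 * z 1 0 0 * z 0 1 0 * z 0 0 1
                 + z 0 0 0 * (z 1 0 0 * z 0 1 1 + z 0 1 0 * z 1 0 1 + z 0 0 1 * z 1 1 0);
             D = (z 0 0 0 * z 0 1 1 + z 0 1 0 * z 0 0 1)
                 * (z 0 0 0 * z 1 0 1 + z 1 0 0 * z 0 0 1)
                 * (z 0 0 0 * z 1 1 0 + z 1 0 0 * z 0 1 0)
         in z 1 1 1 = (A + 2 * sqrt D) / (z 0 0 0)^2)"

text \<open>The unit cube containing v determined by signs (s1,s2,s3) in {-1,1}^3 has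
  vertices v + (s1 i, s2 j, s3 k), i,j,k in {0,1}; the map (i,j,k) \<mapsto> v + (s1 i, s2 j, s3 k)
  is a cube isomorphism {0,1}^3 \<rightarrow> C sending 000 to v.\<close>
definition Kcube :: "(pt \<Rightarrow> complex) \<Rightarrow> pt \<Rightarrow> pt \<Rightarrow> complex" where
  "Kcube x v s = (case s of (s1, s2, s3) \<Rightarrow>
     let z = (\<lambda>i j k. x (vadd v (s1 * i, s2 * j, s3 * k)))
     in (z 1 1 1 * (z 0 0 0)^2
          - z 0 0 0 * (z 1 0 0 * z 0 1 1 + z 0 1 0 * z 1 0 1 + z 0 0 1 * z 1 1 0)) / 2
        - z 1 0 0 * z 0 1 0 * z 0 0 1)"

definition signs3 :: "pt set" where
  "signs3 = {-1, 1} \<times> {-1, 1} \<times> {-1, 1}"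

definition evec :: "nat \<Rightarrow> int \<Rightarrow> pt" where
  "evec p s = (if p = 1 then (s, 0, 0) else if p = 2 then (0, s, 0) else (0, 0, s))"

text \<open>The unit square containing v spanned by directions p < q with signs s, t has vertices,
  in cyclic order, v, v1 = v + s e_p, v2 = v + s e_p + t e_q, v3 = v + t e_q.\<close>
definition sq_factor :: "(pt \<Rightarrow> real) \<Rightarrow> pt \<Rightarrow> (nat \<times> nat) \<times> int \<times> int \<Rightarrow> real" where
  "sq_factor x v d = (case d of ((p, q), s, t) \<Rightarrow>
     x v * x (vadd (vadd v (evec p s)) (evec q t)) + x (vadd v (evec p s)) * x (vadd v (evec q t)))"

definition squares_at :: "((nat \<times> nat) \<times> int \<times> int) set" where
  "squares_at = {(1, 2), (1, 3), (2, 3)} \<times> {-1, 1} \<times> {-1, 1}"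

end

theory Submission
  imports Defs
begin

text \<open>On a single cube, \<open>K\<close> at the corner \<open>000\<close> is affine in \<open>z\<^sub>1\<^sub>1\<^sub>1\<close>, and the positive
  Kashaev relation says exactly that \<open>K = sqrt D\<close>, where \<open>D\<close> is the product of the three face
  factors at \<open>000\<close>. The Kashaev polynomial \<open>K\<^sup>2 - D\<close>, divided by the square of the value
  at the corner, is the same at all eight corners, so \<open>K\<^sup>2 = D\<close> at every corner. Expressing
  \<open>K\<close> at the other corners through \<open>K\<close> at \<open>000\<close> shows that it is positive at \<open>000\<close> and
  \<open>111\<close> and negative at the six remaining corners. Around a lattice point \<open>v\<close> each of the
  twelve unit squares lies in exactly two of the eight unit cubes, so both sides of the
  theorem have the same square; six negative factors make the left side positive.\<close>

definition cube_K :: "(int \<Rightarrow> int \<Rightarrow> int \<Rightarrow> 'a::field) \<Rightarrow> 'a" where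
  "cube_K z = (z 1 1 1 * (z 0 0 0)^2
     - z 0 0 0 * (z 1 0 0 * z 0 1 1 + z 0 1 0 * z 1 0 1 + z 0 0 1 * z 1 1 0)) / 2
     - z 1 0 0 * z 0 1 0 * z 0 0 1"

definition cube_D :: "(int \<Rightarrow> int \<Rightarrow> int \<Rightarrow> 'a::comm_ring) \<Rightarrow> 'a" where
  "cube_D z = (z 0 0 0 * z 0 1 1 + z 0 1 0 * z 0 0 1)
     * (z 0 0 0 * z 1 0 1 + z 1 0 0 * z 0 0 1)
     * (z 0 0 0 * z 1 1 0 + z 1 0 0 * z 0 1 0)"

text \<open>For \<open>s \<in> signs3\<close> this is the cube isomorphism sending the corner
  \<open>((1 - s1) / 2, (1 - s2) / 2, (1 - s3) / 2)\<close> to \<open>000\<close>.\<close>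
definition corner_view :: "(int \<Rightarrow> int \<Rightarrow> int \<Rightarrow> 'a) \<Rightarrow> pt \<Rightarrow> int \<Rightarrow> int \<Rightarrow> int \<Rightarrow> 'a" where
  "corner_view z s = (case s of (s1, s2, s3) \<Rightarrow>
     \<lambda>i j k. z ((1 - s1) div 2 + s1 * i) ((1 - s2) div 2 + s2 * j) ((1 - s3) div 2 + s3 * k))"

lemma kashaev_poly_corner_invariant:
  fixes z :: "int \<Rightarrow> int \<Rightarrow> int \<Rightarrow> 'a::field_char_0"
  assumes "s \<in> signs3"
  shows "(z 0 0 0)^2 * (cube_K (corner_view z s)^2 - cube_D (corner_view z s))
         = (corner_view z s 0 0 0)^2 * (cube_K z ^2 - cube_D z)"
  using assms unfolding signs3_def
  by (auto simp: corner_view_def cube_K_def cube_D_def field_simps power2_eq_square)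

lemma cube_K_corners:
  fixes z :: "int \<Rightarrow> int \<Rightarrow> int \<Rightarrow> 'a::field_char_0"
  defines "F1 \<equiv> z 0 0 0 * z 0 1 1 + z 0 1 0 * z 0 0 1"
    and "F2 \<equiv> z 0 0 0 * z 1 0 1 + z 1 0 0 * z 0 0 1"
    and "F3 \<equiv> z 0 0 0 * z 1 1 0 + z 1 0 0 * z 0 1 0"
  shows "z 0 0 0 * cube_K (corner_view z (-1, 1, 1)) = - (z 1 0 0 * cube_K z + F2 * F3)"
    and "z 0 0 0 * cube_K (corner_view z (1, -1, 1)) = - (z 0 1 0 * cube_K z + F1 * F3)"
    and "z 0 0 0 * cube_K (corner_view z (1, 1, -1)) = - (z 0 0 1 * cube_K z + F1 * F2)"
    and "(z 0 0 0)^2 * cube_K (corner_view z (-1, -1, 1))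
         = - ((F3 + z 1 0 0 * z 0 1 0) * cube_K z + F3 * (z 1 0 0 * F1 + z 0 1 0 * F2))"
    and "(z 0 0 0)^2 * cube_K (corner_view z (-1, 1, -1))
         = - ((F2 + z 1 0 0 * z 0 0 1) * cube_K z + F2 * (z 1 0 0 * F1 + z 0 0 1 * F3))"
    and "(z 0 0 0)^2 * cube_K (corner_view z (1, -1, -1))
         = - ((F1 + z 0 1 0 * z 0 0 1) * cube_K z + F1 * (z 0 1 0 * F2 + z 0 0 1 * F3))"
    and "(z 0 0 0)^3 * cube_K (corner_view z (-1, -1, -1))
         = 2 * (cube_K z)^2 - F1 * F2 * F3
           + (z 1 0 0 * F1 + z 0 1 0 * F2 + z 0 0 1 * F3 + z 1 0 0 * z 0 1 0 * z 0 0 1) * cube_K z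
           + z 1 0 0 * z 0 1 0 * F1 * F2 + z 1 0 0 * z 0 0 1 * F1 * F3 + z 0 1 0 * z 0 0 1 * F2 * F3"
  unfolding F1_def F2_def F3_def
  by (simp_all add: corner_view_def cube_K_def field_simps power2_eq_square power3_eq_cube)

lemma kashaev_corner_signs:
  fixes z :: "int \<Rightarrow> int \<Rightarrow> int \<Rightarrow> real"
  assumes pos: "\<And>i j k. 0 < z i j k" and root: "cube_K z = sqrt (cube_D z)"
  shows "0 < cube_K z"
    and "cube_K (corner_view z (-1, 1, 1)) < 0" "cube_K (corner_view z (1, -1, 1)) < 0"
      "cube_K (corner_view z (1, 1, -1)) < 0"
    and "cube_K (corner_view z (-1, -1, 1)) < 0" "cube_K (corner_view z (-1, 1, -1)) < 0"
      "cube_K (corner_view z (1, -1, -1)) < 0"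
    and "0 < cube_K (corner_view z (-1, -1, -1))"
proof -
  define F1 F2 F3 where "F1 = z 0 0 0 * z 0 1 1 + z 0 1 0 * z 0 0 1"
    and "F2 = z 0 0 0 * z 1 0 1 + z 1 0 0 * z 0 0 1"
    and "F3 = z 0 0 0 * z 1 1 0 + z 1 0 0 * z 0 1 0"
  have F: "0 < F1" "0 < F2" "0 < F3"
    unfolding F1_def F2_def F3_def by (simp_all add: pos add_pos_pos)
  have D: "cube_D z = F1 * F2 * F3"
    by (simp add: cube_D_def F1_def F2_def F3_def)
  show K0: "0 < cube_K z"
    using root F by (simp add: D)
  have K0_sq: "(cube_K z)^2 = F1 * F2 * F3"
    using root F by (simp add: D)
  note corners = cube_K_corners[of z, folded F1_def F2_def F3_def]
  have neg_of_mult: "k < 0" if "0 < c" "c * k = - b" "0 < b" for c k b :: real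
    using that zero_less_mult_pos[of c "- k"] by simp
  have pos_of_mult: "0 < k" if "0 < c" "c * k = b" "0 < b" for c k b :: real
    using that zero_less_mult_pos[of c k] by simp
  show "cube_K (corner_view z (-1, 1, 1)) < 0"
    by (rule neg_of_mult[OF pos[of 0 0 0] corners(1)])
      (use F K0 pos in \<open>intro add_pos_pos mult_pos_pos\<close>)
  show "cube_K (corner_view z (1, -1, 1)) < 0"
    by (rule neg_of_mult[OF pos[of 0 0 0] corners(2)])
      (use F K0 pos in \<open>intro add_pos_pos mult_pos_pos\<close>)
  show "cube_K (corner_view z (1, 1, -1)) < 0"
    by (rule neg_of_mult[OF pos[of 0 0 0] corners(3)])
      (use F K0 pos in \<open>intro add_pos_pos mult_pos_pos\<close>)
  have a: "0 < (z 0 0 0)^2" "0 < (z 0 0 0)^3" using pos[of 0 0 0] by simp_all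
  show "cube_K (corner_view z (-1, -1, 1)) < 0"
    by (rule neg_of_mult[OF a(1) corners(4)])
      (use F K0 pos in \<open>intro add_pos_pos mult_pos_pos\<close>)
  show "cube_K (corner_view z (-1, 1, -1)) < 0"
    by (rule neg_of_mult[OF a(1) corners(5)])
      (use F K0 pos in \<open>intro add_pos_pos mult_pos_pos\<close>)
  show "cube_K (corner_view z (1, -1, -1)) < 0"
    by (rule neg_of_mult[OF a(1) corners(6)])
      (use F K0 pos in \<open>intro add_pos_pos mult_pos_pos\<close>)
  have "(z 0 0 0)^3 * cube_K (corner_view z (-1, -1, -1))
        = (cube_K z)^2
          + (z 1 0 0 * F1 + z 0 1 0 * F2 + z 0 0 1 * F3 + z 1 0 0 * z 0 1 0 * z 0 0 1) * cube_K z
          + z 1 0 0 * z 0 1 0 * F1 * F2 + z 1 0 0 * z 0 0 1 * F1 * F3 + z 0 1 0 * z 0 0 1 * F2 * F3"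
    using corners(7) K0_sq by simp
  then show "0 < cube_K (corner_view z (-1, -1, -1))"
    by (rule pos_of_mult[OF a(2)])
      (use F K0 pos in \<open>intro add_pos_pos mult_pos_pos zero_less_power\<close>)
qed

lemma kashaev_corner:
  fixes z :: "int \<Rightarrow> int \<Rightarrow> int \<Rightarrow> real"
  assumes pos: "\<And>i j k. 0 < z i j k" and root: "cube_K z = sqrt (cube_D z)"
    and s: "(s1, s2, s3) \<in> signs3"
  shows "cube_K (corner_view z (s1, s2, s3))^2 = cube_D (corner_view z (s1, s2, s3))"
    and "sgn (cube_K (corner_view z (s1, s2, s3))) = (if s1 = s2 \<and> s2 = s3 then 1 else -1)"
proof -
  have "0 < cube_D z"
    unfolding cube_D_def using pos by (intro mult_pos_pos add_pos_pos)
  then have "cube_K z ^ 2 - cube_D z = 0"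
    using root by simp
  with kashaev_poly_corner_invariant[OF s, of z] pos[of 0 0 0]
  show "cube_K (corner_view z (s1, s2, s3))^2 = cube_D (corner_view z (s1, s2, s3))"
    by simp
  have "corner_view z (1, 1, 1) = z"
    by (simp add: corner_view_def)
  then show "sgn (cube_K (corner_view z (s1, s2, s3))) = (if s1 = s2 \<and> s2 = s3 then 1 else -1)"
    using s kashaev_corner_signs[OF pos root] by (auto simp: signs3_def)
qed

definition cube_at :: "(pt \<Rightarrow> 'a) \<Rightarrow> pt \<Rightarrow> pt \<Rightarrow> int \<Rightarrow> int \<Rightarrow> int \<Rightarrow> 'a" where
  "cube_at x v s = (case s of (s1, s2, s3) \<Rightarrow> \<lambda>i j k. x (vadd v (s1 * i, s2 * j, s3 * k)))"

lemma Kcube_eq_cube_K: "Kcube x v s = cube_K (cube_at x v s)"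
  by (cases s) (simp add: Kcube_def cube_K_def cube_at_def Let_def)

lemma cube_at_comp: "cube_at (\<lambda>w. f (x w)) v s = (\<lambda>i j k. f (cube_at x v s i j k))"
  by (cases s) (simp add: cube_at_def)

lemma cube_K_of_real: "cube_K (\<lambda>i j k. of_real (z i j k)) = (of_real (cube_K z) :: 'a::real_field)"
  by (simp add: cube_K_def)

lemma cube_at_as_corner_view: "\<exists>w. cube_at x v s = corner_view (cube_at x w (1, 1, 1)) s"
proof (cases s)
  case (fields s1 s2 s3)
  define w where "w = vadd v (- ((1 - s1) div 2), - ((1 - s2) div 2), - ((1 - s3) div 2))"
  have "cube_at x v s = corner_view (cube_at x w (1, 1, 1)) s"
    by (cases v) (simp add: fields w_def cube_at_def corner_view_def vadd_def algebra_simps)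
  then show ?thesis ..
qed

lemma cube_D_cube_at:
  "cube_D (cube_at x v (s1, s2, s3))
   = sq_factor x v ((2, 3), s2, s3) * sq_factor x v ((1, 3), s1, s3) * sq_factor x v ((1, 2), s1, s2)"
  by (cases v) (simp add: cube_D_def cube_at_def sq_factor_def evec_def vadd_def ac_simps)

lemma positive_kashaev_root:
  assumes "positive_kashaev x"
  shows "cube_K (cube_at x w (1, 1, 1)) = sqrt (cube_D (cube_at x w (1, 1, 1)))"
proof -
  have "0 < x (vadd w (0, 0, 0))"
    using assms unfolding positive_kashaev_def by blast
  with assms[unfolded positive_kashaev_def, THEN conjunct2, THEN spec, of w] show ?thesis
    by (simp add: cube_K_def cube_D_def cube_at_def Let_def field_simps power2_eq_square)
qed

lemma prod_signs3_faces:
  fixes g :: "(nat \<times> nat) \<times> int \<times> int \<Rightarrow> 'a::comm_monoid_mult"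
  shows "(\<Prod>(s1, s2, s3)\<in>signs3. g ((2, 3), s2, s3) * g ((1, 3), s1, s3) * g ((1, 2), s1, s2))
       = (\<Prod>d\<in>squares_at. g d)^2"
  by (simp add: signs3_def squares_at_def power2_eq_square ac_simps)

lemma sgn_prod: "sgn (\<Prod>i\<in>A. f i) = (\<Prod>i\<in>A. sgn (f i :: 'a::linordered_idom))"
  by (induction A rule: infinite_finite_induct) (simp_all add: sgn_mult)

lemma prod_cube_K_eq_prod_sq_factor:
  assumes kashaev: "positive_kashaev x"
  shows "(\<Prod>s\<in>signs3. cube_K (cube_at x v s)) = (\<Prod>d\<in>squares_at. sq_factor x v d)"
proof -
  have pos: "0 < x w" for w
    using kashaev unfolding positive_kashaev_def by blast
  have corner: "cube_K (cube_at x v (s1, s2, s3))^2 = cube_D (cube_at x v (s1, s2, s3))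
      \<and> sgn (cube_K (cube_at x v (s1, s2, s3))) = (if s1 = s2 \<and> s2 = s3 then 1 else -1)"
    if "(s1, s2, s3) \<in> signs3" for s1 s2 s3
  proof -
    obtain w where "cube_at x v (s1, s2, s3) = corner_view (cube_at x w (1, 1, 1)) (s1, s2, s3)"
      using cube_at_as_corner_view by blast
    with kashaev_corner[OF _ positive_kashaev_root[OF kashaev] that] pos show ?thesis
      by (simp add: cube_at_def)
  qed
  have "(\<Prod>s\<in>signs3. cube_K (cube_at x v s))^2 = (\<Prod>s\<in>signs3. cube_D (cube_at x v s))"
    unfolding prod_power_distrib using corner by (intro prod.cong) auto
  also have "\<dots> = (\<Prod>d\<in>squares_at. sq_factor x v d)^2"
    unfolding prod_signs3_faces[symmetric] by (intro prod.cong) (auto simp: cube_D_cube_at)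
  finally have sq: "(\<Prod>s\<in>signs3. cube_K (cube_at x v s))^2 = (\<Prod>d\<in>squares_at. sq_factor x v d)^2" .
  have "sgn (\<Prod>s\<in>signs3. cube_K (cube_at x v s))
      = (\<Prod>(s1, s2, s3)\<in>signs3. if s1 = s2 \<and> s2 = s3 then 1 else - 1)"
    unfolding sgn_prod using corner by (intro prod.cong) auto
  also have "\<dots> = 1"
    by (simp add: signs3_def)
  finally have "0 < (\<Prod>s\<in>signs3. cube_K (cube_at x v s))"
    by (simp add: sgn_1_pos)
  moreover have "0 < (\<Prod>d\<in>squares_at. sq_factor x v d)"
    by (intro prod_pos) (auto simp: sq_factor_def intro!: add_pos_pos mult_pos_pos pos)
  ultimately show ?thesis
    using sq by simp
qed

theorem theorem2p9:
  fixes x :: "int \<times> int \<times> int \<Rightarrow> real" and v :: "int \<times> int \<times> int"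
  assumes "positive_kashaev x"
  shows "(\<Prod>s\<in>signs3. Kcube (\<lambda>w. complex_of_real (x w)) v s)
         = complex_of_real (\<Prod>d\<in>squares_at. sq_factor x v d)"
  using prod_cube_K_eq_prod_sq_factor[OF assms, of v]
  by (simp add: Kcube_eq_cube_K cube_at_comp cube_K_of_real flip: of_real_prod)

end
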